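(* For a complex double sequence $\{a_{kl}\}_{k,l\ge1}$ and integers $m,n\ge0$ let $Q_{m,n}:=[2^m,2^{m+1}]\times[2^n,2^{n+1}]$ and $A_{mn}:=\max_{(k,l)\in Q_{m,n}\cap\mathbb{N}^2}|a_{kl}|$. Let $T>0$. (a) For any sequence $\{a_{kl}\}\in GM^c_1$ with constant $C$, there exist $c,v>0$, depending only on $C$ and $T$, such that for every $(m,n)$, $m,n\ge1$, with $A_{m-1,n-1}\le T A_{mn}$, there exists a rectangle $Q'_{m-1,n-1}\subset Q_{m-1,n-1}$ of size $2^{m-v}\times2^{n-v}$ satisfying $$\Big|\sum_{(k,l)\in Q'_{m-1,n-1}\cap\mathbb{N}^2}a_{kl}\Big|>c\,2^{m+n}A_{mn}.$$ (b) For any sequence $\{a_{kl}\}\in GM^c_2$ with constant $C$, there exist $c,v>0$, depending only on $C$ and $T$, such that for every $(m,n)$, $m\ge0$, $n\ge1$, with $A_{m+1,n-1}\le T A_{mn}$, there exists a rectangle $Q'_{m+1,n-1}\subset Q_{m+1,n-1}$ of size $2^{m-v}\times2^{n-v}$ satisfying $$\Big|\sum_{(k,l)\in Q'_{m+1,n-1}\cap\mathbb{N}^2}a_{kl}\Big|>c\,2^{m+n}A_{mn}.$$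
   Context: $\Delta^{11}a_{mn}:=a_{mn}-a_{m+1,n}-a_{m,n+1}+a_{m+1,n+1}$. A double sequence $\{a_{mn}\}_{m,n\ge1}$ belongs to $GM^c_1$ (with constant $C$) if $a_{mn}\to0$ as $m+n\to\infty$ and for all $k,l\in\mathbb{N}$, $$\sum_{m=k}^{2k}\sum_{n=l}^{\infty}|\Delta^{11}a_{mn}|+\sum_{m=k}^{\infty}\sum_{n=l}^{2l}|\Delta^{11}a_{mn}|\le C|a_{kl}|;$$ it belongs to $GM^c_2$ (with constant $C$) if $a_{mn}\to0$ as $m+n\to\infty$ and for all $k,l$ the same left-hand side is $\le C|a_{2k,l}|$. A rectangle of size $\alpha\times\beta$ means a set $[s_1,s_1+\alpha]\times[t_1,t_1+\beta]$. *)

theory Defs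
  imports "HOL-Analysis.Analysis"
begin

text \<open>Double sequences are functions nat => nat => complex; only indices >= 1 are used.\<close>

definition Delta11 :: "(nat \<Rightarrow> nat \<Rightarrow> complex) \<Rightarrow> nat \<Rightarrow> nat \<Rightarrow> complex" where
  "Delta11 a m n = a m n - a (Suc m) n - a m (Suc n) + a (Suc m) (Suc n)"

definition tends_to_zero2 :: "(nat \<Rightarrow> nat \<Rightarrow> complex) \<Rightarrow> bool" where
  "tends_to_zero2 a \<longleftrightarrow>
     (\<forall>\<epsilon>>0. \<exists>N. \<forall>m n. 1 \<le> m \<longrightarrow> 1 \<le> n \<longrightarrow> N \<le> m + n \<longrightarrow> norm (a m n) < \<epsilon>)"

definition GM_lhs :: "(nat \<Rightarrow> nat \<Rightarrow> complex) \<Rightarrow> nat \<Rightarrow> nat \<Rightarrow> ennreal" where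
  "GM_lhs a k l =
     (\<Sum>m\<in>{k..2*k}. (\<Sum>j. ennreal (norm (Delta11 a m (l + j)))))
   + (\<Sum>i. (\<Sum>n\<in>{l..2*l}. ennreal (norm (Delta11 a (k + i) n))))"

definition GMc1 :: "real \<Rightarrow> (nat \<Rightarrow> nat \<Rightarrow> complex) \<Rightarrow> bool" where
  "GMc1 C a \<longleftrightarrow> tends_to_zero2 a \<and>
     (\<forall>k l. 1 \<le> k \<longrightarrow> 1 \<le> l \<longrightarrow> GM_lhs a k l \<le> ennreal (C * norm (a k l)))"

definition GMc2 :: "real \<Rightarrow> (nat \<Rightarrow> nat \<Rightarrow> complex) \<Rightarrow> bool" where
  "GMc2 C a \<longleftrightarrow> tends_to_zero2 a \<and>
     (\<forall>k l. 1 \<le> k \<longrightarrow> 1 \<le> l \<longrightarrow> GM_lhs a k l \<le> ennreal (C * norm (a (2*k) l)))"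

definition Amax :: "(nat \<Rightarrow> nat \<Rightarrow> complex) \<Rightarrow> nat \<Rightarrow> nat \<Rightarrow> real" where
  "Amax a m n = Max {norm (a k l) | k l. 2^m \<le> k \<and> k \<le> 2^(Suc m) \<and> 2^n \<le> l \<and> l \<le> 2^(Suc n)}"

definition rect_sum :: "(nat \<Rightarrow> nat \<Rightarrow> complex) \<Rightarrow> real \<Rightarrow> real \<Rightarrow> real \<Rightarrow> real \<Rightarrow> complex" where
  "rect_sum a s1 t1 \<alpha> \<beta> =
     (\<Sum>(k,l)\<in>{(k,l). 1 \<le> k \<and> 1 \<le> l \<and> s1 \<le> real k \<and> real k \<le> s1 + \<alpha>
                          \<and> t1 \<le> real l \<and> real l \<le> t1 + \<beta>}. a k l)"

definition rect_in_Q :: "real \<Rightarrow> real \<Rightarrow> real \<Rightarrow> real \<Rightarrow> nat \<Rightarrow> nat \<Rightarrow> bool" where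
  "rect_in_Q s1 t1 \<alpha> \<beta> m n \<longleftrightarrow>
     {s1..s1+\<alpha>} \<times> {t1..t1+\<beta>} \<subseteq> {2^m..2^(Suc m)} \<times> {2^n..2^(Suc n)}"

end

theory Submission
  imports Defs
begin

text \<open>Since a vanishes at infinity, the first differences of a along a row or a column are
  bounded by the tails of the series of the Delta11 a, so a bound on GM_lhs a k l keeps every value
  on [k, 2k] x [l, 2l] within C |a k l| (for GMc2: C |a (2k) l|) of a k l. Chaining two such
  comparisons, every value on the dyadic block Q_{m-1,n-1} (for GMc2: every value at an even first
  index on Q_{m+1,n-1}) has modulus at least A_{mn} / K, with K = (1 + C)^2 (resp. (1 + 2C)^2).
  The hypothesis on A_{m-1,n-1} (resp. A_{m+1,n-1}) bounds the variation sums over that block by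
  C T A_{mn}; cutting each side into 2^v windows, pigeonhole yields a window on each side whose
  variation sum is at most C T A_{mn} / 2^v. For v large, all values on the product rectangle lie
  within A_{mn} / (2K) of one value of modulus at least A_{mn} / K, so the rectangle sum has
  modulus at least its area times A_{mn} / (2K).\<close>

lemma norm_diff_le_sum_norm_diff:
  fixes f :: "nat \<Rightarrow> 'a::real_normed_vector"
  assumes "k \<le> k'"
  shows "ennreal (norm (f k - f k')) \<le> (\<Sum>i\<in>{k..<k'}. ennreal (norm (f i - f (Suc i))))"
proof -
  have "(\<Sum>i\<in>{k..<k'}. f i - f (Suc i)) = - (\<Sum>i\<in>{k..<k'}. f (Suc i) - f i)"
    by (simp flip: sum_negf)
  then have "f k - f k' = (\<Sum>i\<in>{k..<k'}. f i - f (Suc i))"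
    using sum_Suc_diff'[OF assms, of f] by simp
  then have "norm (f k - f k') \<le> (\<Sum>i\<in>{k..<k'}. norm (f i - f (Suc i)))"
    by (simp add: norm_sum)
  then show ?thesis
    by (simp add: ennreal_leI)
qed

lemma norm_le_suminf_norm_diff:
  fixes f :: "nat \<Rightarrow> 'a::real_normed_vector"
  assumes lim: "f \<longlonglongrightarrow> 0" and "N \<le> t"
  shows "ennreal (norm (f t)) \<le> (\<Sum>j. ennreal (norm (f (N + j) - f (Suc (N + j)))))"
    (is "_ \<le> ?S")
proof (rule LIMSEQ_le_const)
  have "(\<lambda>J. ennreal (norm (f (t + J)))) \<longlonglongrightarrow> 0"
    using tendsto_ennrealI[OF LIMSEQ_ignore_initial_segment[OF tendsto_norm_zero[OF lim], of t]]
    by (simp add: add.commute)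
  then show "(\<lambda>J. ?S + ennreal (norm (f (t + J)))) \<longlonglongrightarrow> ?S"
    using tendsto_add[OF tendsto_const, of _ 0 sequentially ?S] by simp
  show "\<exists>J0. \<forall>J\<ge>J0. ennreal (norm (f t)) \<le> ?S + ennreal (norm (f (t + J)))"
  proof (intro exI allI impI)
    fix J :: nat
    have "(\<Sum>i\<in>{t..<t+J}. ennreal (norm (f i - f (Suc i))))
        = (\<Sum>j\<in>{t-N..<t-N+J}. ennreal (norm (f (N + j) - f (Suc (N + j)))))"
      by (rule sum.reindex_bij_witness[where i="\<lambda>j. N + j" and j="\<lambda>i. i - N"])
        (use assms(2) in auto)
    also have "\<dots> \<le> ?S"
      by (rule sum_le_suminf) auto
    finally have diff_le: "ennreal (norm (f t - f (t + J))) \<le> ?S"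
      using norm_diff_le_sum_norm_diff[of t "t + J" f] by simp
    have "norm (f t) \<le> norm (f t - f (t + J)) + norm (f (t + J))"
      using norm_triangle_sub[of "f t" "f (t + J)"] by (simp add: add.commute)
    then have "ennreal (norm (f t)) \<le> ennreal (norm (f t - f (t + J))) + ennreal (norm (f (t + J)))"
      by (metis ennreal_leI ennreal_plus norm_ge_zero)
    also have "\<dots> \<le> ?S + ennreal (norm (f (t + J)))"
      by (rule add_right_mono[OF diff_le])
    finally show "ennreal (norm (f t)) \<le> ?S + ennreal (norm (f (t + J)))" .
  qed
qed

definition Delta11_tail_snd :: "(nat \<Rightarrow> nat \<Rightarrow> complex) \<Rightarrow> nat \<Rightarrow> nat \<Rightarrow> ennreal" where
  "Delta11_tail_snd a l m = (\<Sum>j. ennreal (norm (Delta11 a m (l + j))))"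

definition Delta11_tail_fst :: "(nat \<Rightarrow> nat \<Rightarrow> complex) \<Rightarrow> nat \<Rightarrow> nat \<Rightarrow> ennreal" where
  "Delta11_tail_fst a k n = (\<Sum>i. ennreal (norm (Delta11 a (k + i) n)))"

lemma tends_to_zero2_snd:
  assumes "tends_to_zero2 a" "1 \<le> m"
  shows "(\<lambda>n. a m n) \<longlonglongrightarrow> 0"
proof (rule LIMSEQ_I)
  fix r :: real assume "0 < r"
  then obtain N where N: "\<And>m n. 1 \<le> m \<Longrightarrow> 1 \<le> n \<Longrightarrow> N \<le> m + n \<Longrightarrow> norm (a m n) < r"
    using assms(1) unfolding tends_to_zero2_def by blast
  show "\<exists>n0. \<forall>n\<ge>n0. norm (a m n - 0) < r"
  proof (intro exI allI impI)
    fix n assume "Suc N \<le> n"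
    then show "norm (a m n - 0) < r"
      using N[of m n] assms(2) by simp
  qed
qed

lemma tends_to_zero2_fst:
  assumes "tends_to_zero2 a" "1 \<le> n"
  shows "(\<lambda>m. a m n) \<longlonglongrightarrow> 0"
proof (rule LIMSEQ_I)
  fix r :: real assume "0 < r"
  then obtain N where N: "\<And>m n. 1 \<le> m \<Longrightarrow> 1 \<le> n \<Longrightarrow> N \<le> m + n \<Longrightarrow> norm (a m n) < r"
    using assms(1) unfolding tends_to_zero2_def by blast
  show "\<exists>m0. \<forall>m\<ge>m0. norm (a m n - 0) < r"
  proof (intro exI allI impI)
    fix m assume "Suc N \<le> m"
    then show "norm (a m n - 0) < r"
      using N[of m n] assms(2) by simp
  qed
qed

text \<open>Delta11 is a difference of differences in either order, so the tails bound the
  first differences of a along rows and along columns.\<close>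

lemma norm_diff_fst_le_Delta11_tail_snd:
  assumes "tends_to_zero2 a" "1 \<le> m" "l \<le> n"
  shows "ennreal (norm (a m n - a (Suc m) n)) \<le> Delta11_tail_snd a l m"
proof -
  have "(\<lambda>n. a m n) \<longlonglongrightarrow> 0" "(\<lambda>n. a (Suc m) n) \<longlonglongrightarrow> 0"
    using tends_to_zero2_snd[OF assms(1)] assms(2) by auto
  then have "(\<lambda>n. a m n - a (Suc m) n) \<longlonglongrightarrow> 0"
    using tendsto_diff by force
  moreover have "Delta11 a m j = (a m j - a (Suc m) j) - (a m (Suc j) - a (Suc m) (Suc j))" for j
    by (simp add: Delta11_def)
  ultimately show ?thesis
    using norm_le_suminf_norm_diff[OF _ assms(3)] by (simp add: Delta11_tail_snd_def)
qed

lemma norm_diff_snd_le_Delta11_tail_fst: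
  assumes "tends_to_zero2 a" "1 \<le> n" "k \<le> m"
  shows "ennreal (norm (a m n - a m (Suc n))) \<le> Delta11_tail_fst a k n"
proof -
  have "(\<lambda>m. a m n) \<longlonglongrightarrow> 0" "(\<lambda>m. a m (Suc n)) \<longlonglongrightarrow> 0"
    using tends_to_zero2_fst[OF assms(1)] assms(2) by auto
  then have "(\<lambda>m. a m n - a m (Suc n)) \<longlonglongrightarrow> 0"
    using tendsto_diff by force
  moreover have "Delta11 a i n = (a i n - a i (Suc n)) - (a (Suc i) n - a (Suc i) (Suc n))" for i
    by (simp add: Delta11_def)
  ultimately show ?thesis
    using norm_le_suminf_norm_diff[OF _ assms(3)] by (simp add: Delta11_tail_fst_def)
qed

lemma norm_diff_le_Delta11_tails:
  assumes tz: "tends_to_zero2 a" and "1 \<le> k" "k \<le> m" "m \<le> m'" "1 \<le> l" "l \<le> n" "n \<le> n'"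
  shows "ennreal (norm (a m n - a m' n'))
    \<le> (\<Sum>i\<in>{m..<m'}. Delta11_tail_snd a l i) + (\<Sum>j\<in>{n..<n'}. Delta11_tail_fst a k j)"
proof -
  have "norm (a m n - a m' n') \<le> norm (a m n - a m' n) + norm (a m' n - a m' n')"
    by (rule norm_diff_triangle_le) auto
  then have "ennreal (norm (a m n - a m' n')) \<le> ennreal (norm (a m n - a m' n)) + ennreal (norm (a m' n - a m' n'))"
    by (simp flip: ennreal_plus add: ennreal_leI)
  also have "ennreal (norm (a m n - a m' n)) \<le> (\<Sum>i\<in>{m..<m'}. ennreal (norm (a i n - a (Suc i) n)))"
    using norm_diff_le_sum_norm_diff[OF assms(4), of "\<lambda>i. a i n"] by simp
  also have "\<dots> \<le> (\<Sum>i\<in>{m..<m'}. Delta11_tail_snd a l i)"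
    by (intro sum_mono norm_diff_fst_le_Delta11_tail_snd[OF tz]) (use assms in auto)
  also have "ennreal (norm (a m' n - a m' n')) \<le> (\<Sum>j\<in>{n..<n'}. ennreal (norm (a m' j - a m' (Suc j))))"
    using norm_diff_le_sum_norm_diff[OF assms(7), of "\<lambda>j. a m' j"] by simp
  also have "\<dots> \<le> (\<Sum>j\<in>{n..<n'}. Delta11_tail_fst a k j)"
    by (intro sum_mono norm_diff_snd_le_Delta11_tail_fst[OF tz]) (use assms in auto)
  finally show ?thesis by simp
qed

lemma GM_lhs_eq_Delta11_tails:
  "GM_lhs a k l = (\<Sum>i\<in>{k..2*k}. Delta11_tail_snd a l i) + (\<Sum>j\<in>{l..2*l}. Delta11_tail_fst a k j)"
  unfolding GM_lhs_def Delta11_tail_snd_def Delta11_tail_fst_def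
  by (subst suminf_sum[OF summableI]) (rule refl)

lemma sum_Delta11_tail_snd_le_GM_lhs: "(\<Sum>i\<in>{k..<2*k}. Delta11_tail_snd a l i) \<le> GM_lhs a k l"
proof -
  have "(\<Sum>i\<in>{k..<2*k}. Delta11_tail_snd a l i) \<le> (\<Sum>i\<in>{k..2*k}. Delta11_tail_snd a l i)"
    by (intro sum_mono2) auto
  then show ?thesis
    unfolding GM_lhs_eq_Delta11_tails by (simp add: add_increasing2)
qed

lemma sum_Delta11_tail_fst_le_GM_lhs: "(\<Sum>j\<in>{l..<2*l}. Delta11_tail_fst a k j) \<le> GM_lhs a k l"
proof -
  have "(\<Sum>j\<in>{l..<2*l}. Delta11_tail_fst a k j) \<le> (\<Sum>j\<in>{l..2*l}. Delta11_tail_fst a k j)"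
    by (intro sum_mono2) auto
  then show ?thesis
    unfolding GM_lhs_eq_Delta11_tails by (simp add: add_increasing)
qed

lemma norm_diff_le_of_GM_lhs_le:
  assumes tz: "tends_to_zero2 a" and GM: "GM_lhs a k l \<le> ennreal r" and "0 \<le> r"
    and "1 \<le> k" "1 \<le> l" "k \<le> k'" "k' \<le> 2*k" "l \<le> l'" "l' \<le> 2*l"
  shows "norm (a k l - a k' l') \<le> r"
proof -
  have "ennreal (norm (a k l - a k' l'))
      \<le> (\<Sum>i\<in>{k..<k'}. Delta11_tail_snd a l i) + (\<Sum>j\<in>{l..<l'}. Delta11_tail_fst a k j)"
    by (rule norm_diff_le_Delta11_tails[OF tz]) (use assms in auto)
  also have "\<dots> \<le> GM_lhs a k l"
    unfolding GM_lhs_eq_Delta11_tails by (intro add_mono sum_mono2) (use assms in auto)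
  also have "\<dots> \<le> ennreal r"
    by (rule GM)
  finally show ?thesis
    using ennreal_le_iff[OF \<open>0 \<le> r\<close>] by blast
qed

lemma Amax_eq_Max_image:
  "Amax a m n = Max ((\<lambda>(k, l). norm (a k l)) ` ({2^m..2^Suc m} \<times> {2^n..2^Suc n}))"
  unfolding Amax_def by (rule arg_cong[where f=Max], rule set_eqI) (simp add: image_iff Bex_def, blast)

lemma norm_le_Amax:
  assumes "2^m \<le> k" "k \<le> 2^Suc m" "2^n \<le> l" "l \<le> 2^Suc n"
  shows "norm (a k l) \<le> Amax a m n"
  unfolding Amax_eq_Max_image by (rule Max_ge) (use assms in auto)

lemma Amax_attained:
  obtains k l where "2^m \<le> k" "k \<le> 2^Suc m" "2^n \<le> l" "l \<le> 2^Suc n" "norm (a k l) = Amax a m n"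
proof -
  have "Amax a m n \<in> (\<lambda>(k, l). norm (a k l)) ` ({2^m..2^Suc m} \<times> {2^n..2^Suc n})"
    unfolding Amax_eq_Max_image by (rule Max_in) auto
  then show ?thesis
    using that by auto
qed

text \<open>ennreal maps negative reals to 0, so a negative constant C acts as 0.\<close>

lemma GMc1_GM_lhs_le:
  assumes "GMc1 C a" "1 \<le> k" "1 \<le> l"
  shows "GM_lhs a k l \<le> ennreal (max C 0 * norm (a k l))"
  using assms unfolding GMc1_def
  by (meson ennreal_leI max.cobounded1 mult_right_mono norm_ge_zero order_trans)

lemma GMc2_GM_lhs_le:
  assumes "GMc2 C a" "1 \<le> k" "1 \<le> l"
  shows "GM_lhs a k l \<le> ennreal (max C 0 * norm (a (2*k) l))"
  using assms unfolding GMc2_def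
  by (meson ennreal_leI max.cobounded1 mult_right_mono norm_ge_zero order_trans)

lemma Amax_Suc_Suc_le_GMc1:
  assumes g: "GMc1 C a" and kl: "2^m \<le> k" "k \<le> 2^Suc m" "2^n \<le> l" "l \<le> 2^Suc n"
  shows "Amax a (Suc m) (Suc n) \<le> (1 + max C 0)^2 * norm (a k l)"
proof -
  let ?C = "max C 0" and ?k1 = "2^Suc m :: nat" and ?l1 = "2^Suc n :: nat"
  have tz: "tends_to_zero2 a"
    using g by (simp add: GMc1_def)
  have "1 \<le> k" "1 \<le> l"
    using kl by (meson le_trans one_le_power one_le_numeral)+
  obtain k0 l0 where kl0: "?k1 \<le> k0" "k0 \<le> 2 * ?k1" "?l1 \<le> l0" "l0 \<le> 2 * ?l1"
    and max: "norm (a k0 l0) = Amax a (Suc m) (Suc n)"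
    by (metis Amax_attained power_Suc)
  have "norm (a ?k1 ?l1 - a k0 l0) \<le> ?C * norm (a ?k1 ?l1)"
    using kl0 by (intro norm_diff_le_of_GM_lhs_le[OF tz GMc1_GM_lhs_le[OF g]]) auto
  then have Amax_le: "Amax a (Suc m) (Suc n) \<le> (1 + ?C) * norm (a ?k1 ?l1)"
    using max norm_triangle_ineq2[of "a k0 l0" "a ?k1 ?l1"] by (simp add: norm_minus_commute algebra_simps)
  have "norm (a k l - a ?k1 ?l1) \<le> ?C * norm (a k l)"
    using kl \<open>1 \<le> k\<close> \<open>1 \<le> l\<close> by (intro norm_diff_le_of_GM_lhs_le[OF tz GMc1_GM_lhs_le[OF g]]) auto
  then have "norm (a ?k1 ?l1) \<le> (1 + ?C) * norm (a k l)"
    using norm_triangle_ineq2[of "a ?k1 ?l1" "a k l"] by (simp add: norm_minus_commute algebra_simps)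
  then have "(1 + ?C) * norm (a ?k1 ?l1) \<le> (1 + ?C) * ((1 + ?C) * norm (a k l))"
    by (intro mult_left_mono) auto
  then show ?thesis
    using Amax_le by (simp add: power2_eq_square mult.assoc)
qed

lemma Amax_Suc_snd_le_GMc2:
  assumes g: "GMc2 C a" and kl: "2^m \<le> k" "k \<le> 2^Suc m" "2^n \<le> l" "l \<le> 2^Suc n"
  shows "Amax a m (Suc n) \<le> (1 + 2 * max C 0)^2 * norm (a (2*k) l)"
proof -
  let ?C = "max C 0" and ?k0 = "2^m :: nat" and ?l1 = "2^Suc n :: nat"
  have tz: "tends_to_zero2 a"
    using g by (simp add: GMc2_def)
  have "1 \<le> k" "1 \<le> l"
    using kl by (meson le_trans one_le_power one_le_numeral)+
  obtain k0 l0 where kl0: "?k0 \<le> k0" "k0 \<le> 2 * ?k0" "?l1 \<le> l0" "l0 \<le> 2 * ?l1"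
    and max: "norm (a k0 l0) = Amax a m (Suc n)"
    by (metis Amax_attained power_Suc)
  have GM1: "GM_lhs a ?k0 ?l1 \<le> ennreal (?C * norm (a (2 * ?k0) ?l1))"
    by (rule GMc2_GM_lhs_le[OF g]) auto
  have "norm (a ?k0 ?l1 - a k0 l0) \<le> ?C * norm (a (2 * ?k0) ?l1)"
    using kl0 by (intro norm_diff_le_of_GM_lhs_le[OF tz GM1]) auto
  moreover have "norm (a ?k0 ?l1 - a (2 * ?k0) ?l1) \<le> ?C * norm (a (2 * ?k0) ?l1)"
    by (intro norm_diff_le_of_GM_lhs_le[OF tz GM1]) auto
  ultimately have Amax_le: "Amax a m (Suc n) \<le> (1 + 2 * ?C) * norm (a (2 * ?k0) ?l1)"
    using max norm_triangle_ineq2[of "a k0 l0" "a ?k0 ?l1"] norm_triangle_ineq2[of "a ?k0 ?l1" "a (2 * ?k0) ?l1"]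
    by (simp add: norm_minus_commute algebra_simps)
  have GM2: "GM_lhs a k l \<le> ennreal (?C * norm (a (2 * k) l))"
    by (rule GMc2_GM_lhs_le[OF g \<open>1 \<le> k\<close> \<open>1 \<le> l\<close>])
  have "norm (a k l - a (2 * ?k0) ?l1) \<le> ?C * norm (a (2 * k) l)"
    using kl \<open>1 \<le> k\<close> \<open>1 \<le> l\<close> by (intro norm_diff_le_of_GM_lhs_le[OF tz GM2]) auto
  moreover have "norm (a k l - a (2 * k) l) \<le> ?C * norm (a (2 * k) l)"
    using \<open>1 \<le> k\<close> \<open>1 \<le> l\<close> by (intro norm_diff_le_of_GM_lhs_le[OF tz GM2]) auto
  ultimately have "norm (a (2 * ?k0) ?l1) \<le> (1 + 2 * ?C) * norm (a (2 * k) l)"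
    using norm_triangle_ineq2[of "a (2 * ?k0) ?l1" "a k l"] norm_triangle_ineq2[of "a k l" "a (2 * k) l"]
    by (simp add: norm_minus_commute algebra_simps)
  then have "(1 + 2 * ?C) * norm (a (2 * ?k0) ?l1) \<le> (1 + 2 * ?C) * ((1 + 2 * ?C) * norm (a (2 * k) l))"
    by (intro mult_left_mono) auto
  then show ?thesis
    using Amax_le by (simp add: power2_eq_square mult.assoc)
qed

lemma exists_block_sum_le:
  fixes f :: "nat \<Rightarrow> ennreal"
  assumes "0 < p" "0 \<le> B" and total: "(\<Sum>i\<in>{X..<X + p * W}. f i) \<le> ennreal B"
  shows "\<exists>r<p. (\<Sum>i\<in>{X + r * W..<X + r * W + W}. f i) \<le> ennreal (B / p)"
proof -
  define g where "g r = (\<Sum>i\<in>{X + r * W..<X + r * W + W}. f i)" for r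
  have blocks: "(\<Sum>r<q. g r) = (\<Sum>i\<in>{X..<X + q * W}. f i)" for q
  proof (induction q)
    case (Suc q)
    have "(\<Sum>r<Suc q. g r) = (\<Sum>i\<in>{X..<X + q * W}. f i) + (\<Sum>i\<in>{X + q * W..<X + q * W + W}. f i)"
      by (simp only: sum.lessThan_Suc Suc.IH) (simp add: g_def)
    also have "\<dots> = (\<Sum>i\<in>{X..<X + Suc q * W}. f i)"
      using sum.atLeastLessThan_concat[where g=f and m=X and n="X + q * W" and p="X + q * W + W"] by (simp add: ac_simps)
    finally show ?case .
  qed simp
  have "Min (g ` {..<p}) \<in> g ` {..<p}"
    using \<open>0 < p\<close> by (intro Min_in) auto
  then obtain r where r: "r < p" "g r = Min (g ` {..<p})"
    by auto
  have "of_nat p * g r = (\<Sum>r'<p. g r)"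
    by simp
  also have "\<dots> \<le> (\<Sum>r'<p. g r')"
    using r by (intro sum_mono) auto
  also have "\<dots> \<le> ennreal B"
    unfolding blocks by (rule total)
  also have "\<dots> = ennreal (real p * (B / p))"
    using \<open>0 < p\<close> by simp
  also have "\<dots> = ennreal (real p) * ennreal (B / p)"
    using \<open>0 \<le> B\<close> by (intro ennreal_mult) auto
  also have "\<dots> = of_nat p * ennreal (B / p)"
    by (simp add: ennreal_of_nat_eq_real_of_nat)
  finally have "g r \<le> ennreal (B / p)"
    using \<open>0 < p\<close> ennreal_mult_le_mult_iff[of "of_nat p"] by simp
  then show ?thesis
    using r(1) unfolding g_def by blast
qed

lemma exists_dyadic_window_sum_le:
  fixes f :: "nat \<Rightarrow> ennreal" and e w :: nat
  assumes "0 \<le> B" and total: "(\<Sum>i\<in>{2^e..<2^Suc e}. f i) \<le> ennreal B"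
  defines "\<alpha> \<equiv> 2 powr (real e - real w)"
  shows "\<exists>s. 2^e \<le> s \<and> real s + \<alpha> \<le> 2^Suc e \<and> (s = 2^e \<or> 1 \<le> \<alpha>)
    \<and> (\<Sum>i\<in>{s..<s + nat \<lfloor>\<alpha>\<rfloor>}. f i) \<le> ennreal (B / 2^w)"
proof (cases "e < w")
  case True
  then have "\<alpha> \<le> 2 powr (-1)"
    unfolding \<alpha>_def by (intro powr_mono) auto
  then have "\<alpha> < 1" "0 \<le> \<alpha>"
    by (auto simp: \<alpha>_def)
  moreover have "\<alpha> \<le> 2^e"
    using \<open>\<alpha> < 1\<close> one_le_power[of "2::real" e] by linarith
  ultimately show ?thesis
    by (intro exI[of _ "2^e"]) auto
next
  case False
  define W :: nat where "W = 2^(e - w)"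
  have "\<alpha> = W"
    using False by (simp add: \<alpha>_def W_def powr_realpow[symmetric] of_nat_diff)
  have pW: "2^w * W = 2^e"
    using False by (simp add: W_def flip: power_add)
  obtain r where r: "r < 2^w" and small: "(\<Sum>i\<in>{2^e + r * W..<2^e + r * W + W}. f i) \<le> ennreal (B / 2^w)"
    using exists_block_sum_le[where p="2^w" and X="2^e" and W=W and f=f] total pW \<open>0 \<le> B\<close> by (auto simp: mult_2)
  have "(r + 1) * W \<le> 2^w * W"
    using r by (intro mult_right_mono) auto
  then have "2^e + r * W + W \<le> 2^Suc e"
    using pW by simp
  then have "real (2^e + r * W) + \<alpha> \<le> 2^Suc e"
    unfolding \<open>\<alpha> = W\<close> by (metis of_nat_add of_nat_le_iff of_nat_numeral of_nat_power)
  moreover have "1 \<le> \<alpha>"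
    by (simp add: \<open>\<alpha> = W\<close> W_def)
  ultimately show ?thesis
    using small by (intro exI[of _ "2^e + r * W"]) (simp add: \<open>\<alpha> = W\<close>)
qed

lemma norm_sum_ge_card_mult:
  fixes g :: "'b \<Rightarrow> 'a::real_normed_vector"
  assumes near: "\<And>p. p \<in> S \<Longrightarrow> norm (g p - z) \<le> d"
  shows "real (card S) * (norm z - d) \<le> norm (\<Sum>p\<in>S. g p)"
proof (cases "finite S")
  case True
  have "norm (\<Sum>p\<in>S. g p - z) \<le> (\<Sum>p\<in>S. norm (g p - z))"
    by (rule norm_sum)
  also have "\<dots> \<le> real (card S) * d"
    using sum_mono[of S "\<lambda>p. norm (g p - z)" "\<lambda>_. d"] near by simp
  finally have "norm (\<Sum>p\<in>S. g p - z) \<le> real (card S) * d" .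
  moreover have "(\<Sum>p\<in>S. g p - z) = (\<Sum>p\<in>S. g p) - real (card S) *\<^sub>R z"
    by (simp add: sum_subtractf sum_constant_scaleR)
  ultimately show ?thesis
    using norm_triangle_ineq2[of "real (card S) *\<^sub>R z" "\<Sum>p\<in>S. g p"]
    by (simp add: norm_minus_commute algebra_simps)
qed simp

lemma real_le_add_iff_le_add_nat_floor:
  fixes x y :: nat
  assumes "0 \<le> \<gamma>"
  shows "real y \<le> real x + \<gamma> \<longleftrightarrow> y \<le> x + nat \<lfloor>\<gamma>\<rfloor>"
proof -
  have "real y \<le> real x + \<gamma> \<longleftrightarrow> int y - int x \<le> \<lfloor>\<gamma>\<rfloor>"
    by (simp add: le_floor_iff algebra_simps)
  then show ?thesis
    using assms by linarith
qed

lemma rect_sum_eq_sum_box: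
  fixes s t :: nat
  assumes "1 \<le> s" "1 \<le> t" "0 \<le> \<alpha>" "0 \<le> \<beta>"
  shows "rect_sum a s t \<alpha> \<beta> = (\<Sum>(k, l)\<in>{s..s + nat \<lfloor>\<alpha>\<rfloor>} \<times> {t..t + nat \<lfloor>\<beta>\<rfloor>}. a k l)"
proof -
  have "{(k, l). 1 \<le> k \<and> 1 \<le> l \<and> real s \<le> real k \<and> real k \<le> real s + \<alpha>
                 \<and> real t \<le> real l \<and> real l \<le> real t + \<beta>}
      = {s..s + nat \<lfloor>\<alpha>\<rfloor>} \<times> {t..t + nat \<lfloor>\<beta>\<rfloor>}"
    using assms by (auto simp: real_le_add_iff_le_add_nat_floor)
  then show ?thesis
    unfolding rect_sum_def by simp
qed

lemma rect_sum_ge_of_near: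
  fixes s t :: nat and z :: complex
  assumes "1 \<le> s" "1 \<le> t" "0 \<le> \<alpha>" "0 \<le> \<beta>" "L \<le> norm z"
    and near: "\<And>k l. k \<in> {s..s + nat \<lfloor>\<alpha>\<rfloor>} \<Longrightarrow> l \<in> {t..t + nat \<lfloor>\<beta>\<rfloor>}
      \<Longrightarrow> norm (a k l - z) \<le> L / 2"
  shows "\<alpha> * \<beta> * L / 2 \<le> norm (rect_sum a s t \<alpha> \<beta>)"
proof -
  define R where "R = {s..s + nat \<lfloor>\<alpha>\<rfloor>} \<times> {t..t + nat \<lfloor>\<beta>\<rfloor>}"
  have "norm (a s t - z) \<le> L / 2"
    by (rule near) auto
  then have "0 \<le> L"
    using norm_ge_zero[of "a s t - z"] by linarith
  have "\<alpha> * \<beta> \<le> real (Suc (nat \<lfloor>\<alpha>\<rfloor>)) * real (Suc (nat \<lfloor>\<beta>\<rfloor>))"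
    using assms(3,4) by (intro mult_mono) linarith+
  moreover have "card R = Suc (nat \<lfloor>\<alpha>\<rfloor>) * Suc (nat \<lfloor>\<beta>\<rfloor>)"
    by (simp add: R_def card_cartesian_product)
  ultimately have "\<alpha> * \<beta> \<le> real (card R)"
    by (simp only: of_nat_mult)
  then have "\<alpha> * \<beta> * L / 2 \<le> real (card R) * (L / 2)"
    using mult_right_mono[of "\<alpha> * \<beta>" "real (card R)" "L / 2"] \<open>0 \<le> L\<close> by simp
  also have "\<dots> \<le> real (card R) * (norm z - L / 2)"
    using assms(5) by (intro mult_left_mono) auto
  also have "\<dots> \<le> norm (\<Sum>(k, l)\<in>R. a k l)"
  proof (rule norm_sum_ge_card_mult)
    fix p assume "p \<in> R"
    then obtain k l where "p = (k, l)" "k \<in> {s..s + nat \<lfloor>\<alpha>\<rfloor>}" "l \<in> {t..t + nat \<lfloor>\<beta>\<rfloor>}"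
      by (auto simp: R_def)
    then show "norm ((case p of (k, l) \<Rightarrow> a k l) - z) \<le> L / 2"
      using near by simp
  qed
  also have "\<dots> = norm (rect_sum a s t \<alpha> \<beta>)"
    using assms(1-4) by (simp add: R_def rect_sum_eq_sum_box)
  finally show ?thesis .
qed

lemma exists_dyadic_box_small_variation:
  fixes e e' w w' :: nat
  assumes tz: "tends_to_zero2 a" and "0 \<le> B" and GM: "GM_lhs a (2^e) (2^e') \<le> ennreal B"
  defines "\<alpha> \<equiv> 2 powr (real e - real w)" and "\<beta> \<equiv> 2 powr (real e' - real w')"
  shows "\<exists>s t. 2^e \<le> s \<and> real s + \<alpha> \<le> 2^Suc e \<and> (s = 2^e \<or> 1 \<le> \<alpha>)
    \<and> 2^e' \<le> t \<and> real t + \<beta> \<le> 2^Suc e'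
    \<and> (\<forall>k\<in>{s..s + nat \<lfloor>\<alpha>\<rfloor>}. \<forall>l\<in>{t..t + nat \<lfloor>\<beta>\<rfloor>}.
          norm (a k l - a s t) \<le> B / 2^w + B / 2^w')"
proof -
  have "(\<Sum>i\<in>{2^e..<2^Suc e}. Delta11_tail_snd a (2^e') i) \<le> ennreal B"
    using order_trans[OF sum_Delta11_tail_snd_le_GM_lhs GM] by simp
  then obtain s where s: "2^e \<le> s" "real s + \<alpha> \<le> 2^Suc e" "s = 2^e \<or> 1 \<le> \<alpha>"
    and s_small: "(\<Sum>i\<in>{s..<s + nat \<lfloor>\<alpha>\<rfloor>}. Delta11_tail_snd a (2^e') i) \<le> ennreal (B / 2^w)"
    using exists_dyadic_window_sum_le[OF \<open>0 \<le> B\<close>] unfolding \<alpha>_def by blast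
  have "(\<Sum>j\<in>{2^e'..<2^Suc e'}. Delta11_tail_fst a (2^e) j) \<le> ennreal B"
    using order_trans[OF sum_Delta11_tail_fst_le_GM_lhs GM] by simp
  then obtain t where t: "2^e' \<le> t" "real t + \<beta> \<le> 2^Suc e'"
    and t_small: "(\<Sum>j\<in>{t..<t + nat \<lfloor>\<beta>\<rfloor>}. Delta11_tail_fst a (2^e) j) \<le> ennreal (B / 2^w')"
    using exists_dyadic_window_sum_le[OF \<open>0 \<le> B\<close>] unfolding \<beta>_def by blast
  have "norm (a k l - a s t) \<le> B / 2^w + B / 2^w'"
    if kl: "k \<in> {s..s + nat \<lfloor>\<alpha>\<rfloor>}" "l \<in> {t..t + nat \<lfloor>\<beta>\<rfloor>}" for k l
  proof -
    have "ennreal (norm (a s t - a k l))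
        \<le> (\<Sum>i\<in>{s..<k}. Delta11_tail_snd a (2^e') i) + (\<Sum>j\<in>{t..<l}. Delta11_tail_fst a (2^e) j)"
      by (rule norm_diff_le_Delta11_tails[OF tz]) (use kl s(1) t(1) in auto)
    also have "\<dots> \<le> ennreal (B / 2^w) + ennreal (B / 2^w')"
      using kl by (intro add_mono order_trans[OF sum_mono2 s_small] order_trans[OF sum_mono2 t_small]) auto
    also have "\<dots> = ennreal (B / 2^w + B / 2^w')"
      using \<open>0 \<le> B\<close> by simp
    finally show ?thesis
      using ennreal_le_iff[of "B / 2^w + B / 2^w'"] \<open>0 \<le> B\<close> by (simp add: norm_minus_commute)
  qed
  then show ?thesis
    using s t by blast
qed

text \<open>P marks the first indices at which the lower bound L is available. It has to hold at the
  corner 2^e, because a window narrower than 1 consists of that corner alone, and at one of any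
  two consecutive indices, so that every wider window meets it.\<close>

lemma exists_rectangle_sum_ge:
  fixes e e' w w' :: nat and P :: "nat \<Rightarrow> bool"
  assumes tz: "tends_to_zero2 a" and "0 \<le> B" and GM: "GM_lhs a (2^e) (2^e') \<le> ennreal B"
    and gap: "4 * (B / 2^w + B / 2^w') \<le> L"
    and low: "\<And>k l. 2^e \<le> k \<Longrightarrow> k \<le> 2^Suc e \<Longrightarrow> 2^e' \<le> l \<Longrightarrow> l \<le> 2^Suc e' \<Longrightarrow> P k
      \<Longrightarrow> L \<le> norm (a k l)"
    and P: "P (2^e)" "\<And>k. P k \<or> P (Suc k)"
  defines "\<alpha> \<equiv> 2 powr (real e - real w)" and "\<beta> \<equiv> 2 powr (real e' - real w')"
  shows "\<exists>s1 t1. rect_in_Q s1 t1 \<alpha> \<beta> e e' \<and> \<alpha> * \<beta> * L / 2 \<le> norm (rect_sum a s1 t1 \<alpha> \<beta>)"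
proof -
  obtain s t where s: "2^e \<le> s" "real s + \<alpha> \<le> 2^Suc e" "s = 2^e \<or> 1 \<le> \<alpha>"
    and t: "2^e' \<le> t" "real t + \<beta> \<le> 2^Suc e'"
    and near: "\<And>k l. k \<in> {s..s + nat \<lfloor>\<alpha>\<rfloor>} \<Longrightarrow> l \<in> {t..t + nat \<lfloor>\<beta>\<rfloor>}
      \<Longrightarrow> norm (a k l - a s t) \<le> B / 2^w + B / 2^w'"
    using exists_dyadic_box_small_variation[OF tz \<open>0 \<le> B\<close> GM, of w w'] unfolding \<alpha>_def \<beta>_def by blast
  have "0 \<le> \<alpha>" "0 \<le> \<beta>"
    by (simp_all add: \<alpha>_def \<beta>_def)
  have "1 \<le> s" "1 \<le> t"
    using s(1) t(1) by (meson le_trans one_le_power one_le_numeral)+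
  obtain s0 where s0: "s0 \<in> {s..s + nat \<lfloor>\<alpha>\<rfloor>}" "P s0"
  proof (cases "P s")
    case True
    then show ?thesis
      using that[of s] by simp
  next
    case False
    then have "1 \<le> \<alpha>"
      using s(3) P(1) by auto
    then have "Suc s \<in> {s..s + nat \<lfloor>\<alpha>\<rfloor>}"
      by simp linarith
    then show ?thesis
      using that P(2)[of s] False by blast
  qed
  have "real s0 \<le> real (2^Suc e :: nat)"
    using s0(1) s(2) \<open>0 \<le> \<alpha>\<close> by simp linarith
  moreover have "real t \<le> real (2^Suc e' :: nat)"
    using t(2) \<open>0 \<le> \<beta>\<close> by simp
  ultimately have "L \<le> norm (a s0 t)"
    using s0 s(1) t(1) unfolding of_nat_le_iff by (intro low) auto
  moreover have "norm (a k l - a s0 t) \<le> L / 2"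
    if "k \<in> {s..s + nat \<lfloor>\<alpha>\<rfloor>}" "l \<in> {t..t + nat \<lfloor>\<beta>\<rfloor>}" for k l
    using near[OF that] near[OF s0(1), of t] norm_triangle_ineq4[of "a k l - a s t" "a s0 t - a s t"] gap
    by simp
  ultimately have "\<alpha> * \<beta> * L / 2 \<le> norm (rect_sum a s t \<alpha> \<beta>)"
    using \<open>1 \<le> s\<close> \<open>1 \<le> t\<close> \<open>0 \<le> \<alpha>\<close> \<open>0 \<le> \<beta>\<close> by (intro rect_sum_ge_of_near)
  moreover have "rect_in_Q s t \<alpha> \<beta> e e'"
    using s(1,2) t \<open>0 \<le> \<alpha>\<close> \<open>0 \<le> \<beta>\<close> unfolding rect_in_Q_def
    by (intro Sigma_mono) (auto simp flip: of_nat_le_iff)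
  ultimately show ?thesis
    by blast
qed

lemma two_powr_diff_mult_two_powr_diff:
  "2 powr (real m - real v) * 2 powr (real n - real v) = 2^(m + n) / 4^v"
  by (simp add: powr_diff powr_realpow power_add power_mult_distrib[symmetric])

lemma GMc1_exists_rectangle_sum_gt:
  fixes C T :: real
  assumes g: "GMc1 C a" and "0 \<le> T" and "1 \<le> m" "1 \<le> n"
    and hA: "Amax a (m-1) (n-1) \<le> T * Amax a m n" and pos: "0 < Amax a m n"
    and v: "2 \<le> v" "16 * max C 0 * T * (1 + max C 0)^2 \<le> 2^v"
  defines "\<alpha> \<equiv> 2 powr (real m - real v)" and "\<beta> \<equiv> 2 powr (real n - real v)"
  shows "\<exists>s1 t1. rect_in_Q s1 t1 \<alpha> \<beta> (m-1) (n-1)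
    \<and> 2^(m+n) * Amax a m n / (4 * 4^v * (1 + max C 0)^2) < norm (rect_sum a s1 t1 \<alpha> \<beta>)"
proof -
  let ?C = "max C 0" and ?K = "(1 + max C 0)^2" and ?A = "Amax a m n"
  obtain m' n' v' where mn: "m = Suc m'" "n = Suc n'" and "v = Suc v'"
    using \<open>1 \<le> m\<close> \<open>1 \<le> n\<close> v(1) by (cases m; cases n; cases v) auto
  have tz: "tends_to_zero2 a"
    using g by (simp add: GMc1_def)
  have "GM_lhs a (2^m') (2^n') \<le> ennreal (?C * norm (a (2^m') (2^n')))"
    by (rule GMc1_GM_lhs_le[OF g]) auto
  also have "?C * norm (a (2^m') (2^n')) \<le> ?C * (T * ?A)"
    using hA norm_le_Amax[of m' "2^m'" n' "2^n'" a] by (intro mult_left_mono) (auto simp: mn)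
  finally have GM: "GM_lhs a (2^m') (2^n') \<le> ennreal (?C * T * ?A)"
    by (simp add: ennreal_leI mult.assoc)
  have "0 < ?K" by simp
  have gap: "4 * (?C * T * ?A / 2^v' + ?C * T * ?A / 2^v') \<le> ?A / ?K"
    using v(2) pos \<open>0 < ?K\<close> \<open>v = Suc v'\<close> by (simp add: field_simps)
  have low: "?A / ?K \<le> norm (a k l)"
    if "2^m' \<le> k" "k \<le> 2^Suc m'" "2^n' \<le> l" "l \<le> 2^Suc n'" "True" for k l
    using Amax_Suc_Suc_le_GMc1[OF g that(1-4)] \<open>0 < ?K\<close> by (simp add: mn divide_le_eq mult.commute)
  have "\<alpha> = 2 powr (real m' - real v')" "\<beta> = 2 powr (real n' - real v')"
    by (simp_all add: \<alpha>_def \<beta>_def mn \<open>v = Suc v'\<close>)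
  then have "\<exists>s1 t1. rect_in_Q s1 t1 \<alpha> \<beta> m' n'
      \<and> \<alpha> * \<beta> * (?A / ?K) / 2 \<le> norm (rect_sum a s1 t1 \<alpha> \<beta>)"
    using exists_rectangle_sum_ge[OF tz _ GM gap low] \<open>0 \<le> T\<close> pos by simp
  moreover have "2^(m+n) * ?A / (4 * 4^v * ?K) < \<alpha> * \<beta> * (?A / ?K) / 2"
    using pos \<open>0 < ?K\<close> by (simp add: \<alpha>_def \<beta>_def two_powr_diff_mult_two_powr_diff field_simps)
  ultimately show ?thesis
    unfolding mn by (auto intro: less_le_trans)
qed

lemma GMc2_exists_rectangle_sum_gt:
  fixes C T :: real
  assumes g: "GMc2 C a" and "0 \<le> T" and "1 \<le> n"
    and hA: "Amax a (m+1) (n-1) \<le> T * Amax a m n" and pos: "0 < Amax a m n"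
    and v: "2 \<le> v" "16 * max C 0 * T * (1 + 2 * max C 0)^2 \<le> 2^v"
  defines "\<alpha> \<equiv> 2 powr (real m - real v)" and "\<beta> \<equiv> 2 powr (real n - real v)"
  shows "\<exists>s1 t1. rect_in_Q s1 t1 \<alpha> \<beta> (m+1) (n-1)
    \<and> 2^(m+n) * Amax a m n / (4 * 4^v * (1 + 2 * max C 0)^2) < norm (rect_sum a s1 t1 \<alpha> \<beta>)"
proof -
  let ?C = "max C 0" and ?K = "(1 + 2 * max C 0)^2" and ?A = "Amax a m n"
  obtain n' v' where n: "n = Suc n'" and "v = Suc v'"
    using \<open>1 \<le> n\<close> v(1) by (cases n; cases v) auto
  have tz: "tends_to_zero2 a"
    using g by (simp add: GMc2_def)
  have "GM_lhs a (2^Suc m) (2^n') \<le> ennreal (?C * norm (a (2 * 2^Suc m) (2^n')))"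
    by (rule GMc2_GM_lhs_le[OF g]) auto
  also have "?C * norm (a (2 * 2^Suc m) (2^n')) \<le> ?C * (T * ?A)"
    using hA norm_le_Amax[of "Suc m" "2 * 2^Suc m" n' "2^n'" a] by (intro mult_left_mono) (auto simp: n)
  finally have GM: "GM_lhs a (2^Suc m) (2^n') \<le> ennreal (?C * T * ?A)"
    by (simp add: ennreal_leI mult.assoc)
  have "0 < ?K"
    by (simp add: add_pos_nonneg)
  have "4 * (?C * T * ?A / 2^v' + ?C * T * ?A / 2^v') \<le> ?A / ?K"
    using v(2) pos \<open>0 < ?K\<close> \<open>v = Suc v'\<close> by (simp add: field_simps)
  moreover have "?C * T * ?A / 2^Suc v \<le> ?C * T * ?A / 2^v'"
    using \<open>0 \<le> T\<close> pos by (intro divide_left_mono) (auto simp: \<open>v = Suc v'\<close>)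
  ultimately have gap: "4 * (?C * T * ?A / 2^Suc v + ?C * T * ?A / 2^v') \<le> ?A / ?K"
    by (smt (verit))
  have low: "?A / ?K \<le> norm (a k l)"
    if "2^Suc m \<le> k" "k \<le> 2^Suc (Suc m)" "2^n' \<le> l" "l \<le> 2^Suc n'" "even k" for k l
  proof -
    obtain k' where "k = 2 * k'"
      using \<open>even k\<close> by blast
    then show ?thesis
      using Amax_Suc_snd_le_GMc2[OF g, of m k' n' l] that \<open>0 < ?K\<close>
      by (simp add: n divide_le_eq mult.commute)
  qed
  have "\<alpha> = 2 powr (real (Suc m) - real (Suc v))" "\<beta> = 2 powr (real n' - real v')"
    by (simp add: \<alpha>_def, simp add: \<beta>_def n \<open>v = Suc v'\<close>)
  then have "\<exists>s1 t1. rect_in_Q s1 t1 \<alpha> \<beta> (Suc m) n'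
      \<and> \<alpha> * \<beta> * (?A / ?K) / 2 \<le> norm (rect_sum a s1 t1 \<alpha> \<beta>)"
    using exists_rectangle_sum_ge[OF tz _ GM gap low] \<open>0 \<le> T\<close> pos by simp
  moreover have "2^(m+n) * ?A / (4 * 4^v * ?K) < \<alpha> * \<beta> * (?A / ?K) / 2"
    using pos \<open>0 < ?K\<close> by (simp add: \<alpha>_def \<beta>_def two_powr_diff_mult_two_powr_diff field_simps)
  ultimately show ?thesis
    unfolding n by (auto intro: less_le_trans)
qed

theorem lemma1:
  fixes C T :: real
  assumes "T > 0"
  shows
   "(\<exists>c>0. \<exists>v::nat. v > 0 \<and>
      (\<forall>a. GMc1 C a \<longrightarrow>
        (\<forall>m n. 1 \<le> m \<longrightarrow> 1 \<le> n \<longrightarrow> Amax a (m-1) (n-1) \<le> T * Amax a m n \<longrightarrow> 0 < Amax a m n \<longrightarrow>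
          (\<exists>s1 t1. rect_in_Q s1 t1 (2 powr (real m - real v)) (2 powr (real n - real v)) (m-1) (n-1)
             \<and> norm (rect_sum a s1 t1 (2 powr (real m - real v)) (2 powr (real n - real v)))
                 > c * 2^(m+n) * Amax a m n))))
    \<and>
    (\<exists>c>0. \<exists>v::nat. v > 0 \<and>
      (\<forall>a. GMc2 C a \<longrightarrow>
        (\<forall>m n. 1 \<le> n \<longrightarrow> Amax a (m+1) (n-1) \<le> T * Amax a m n \<longrightarrow> 0 < Amax a m n \<longrightarrow>
          (\<exists>s1 t1. rect_in_Q s1 t1 (2 powr (real m - real v)) (2 powr (real n - real v)) (m+1) (n-1)
             \<and> norm (rect_sum a s1 t1 (2 powr (real m - real v)) (2 powr (real n - real v)))
                 > c * 2^(m+n) * Amax a m n))))"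
proof -
  let ?C = "max C 0"
  obtain v :: nat where v: "2 \<le> v" "16 * ?C * T * (1 + 2 * ?C)^2 \<le> 2^v"
  proof -
    obtain v0 :: nat where "16 * ?C * T * (1 + 2 * ?C)^2 < 2^v0"
      using real_arch_pow[of 2] by auto
    moreover have "(2::real)^v0 \<le> 2^(v0 + 2)"
      by (rule power_increasing) auto
    ultimately show thesis
      by (intro that[of "v0 + 2"]) linarith+
  qed
  have "16 * ?C * T * (1 + ?C)^2 \<le> 16 * ?C * T * (1 + 2 * ?C)^2"
    using \<open>T > 0\<close> by (intro mult_left_mono power_mono) auto
  then have v1: "16 * ?C * T * (1 + ?C)^2 \<le> 2^v"
    using v(2) by linarith
  show ?thesis
    using GMc1_exists_rectangle_sum_gt[OF _ _ _ _ _ _ v(1) v1] GMc2_exists_rectangle_sum_gt[OF _ _ _ _ _ v]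
      \<open>T > 0\<close> v(1)
    by (intro conjI[OF exI[of _ "1 / (4 * 4^v * (1 + ?C)^2)"] exI[of _ "1 / (4 * 4^v * (1 + 2 * ?C)^2)"]]
        conjI exI[of _ v]) auto
qed

end
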